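(* Assume hypotheses (A1)–(A4) below. Let $\sigma_n\to\infty$ and $h_n\to0$ (with $h_n\in(0,h_0]$) as $n\to\infty$. Then the functionals $\mathcal E_{\sigma_n,h_n}$ $\Gamma$-converge as $n\to\infty$ in the strong topology of $\mathcal T_0$ to $\overline{\mathcal E}_\infty$.
   Context: Let $\{\mathcal T_\sigma\}_{\sigma\in\mathbb R\cup\{\pm\infty\}}$ be reflexive Banach spaces with norms $\|\cdot\|_{\mathcal T_\sigma}$, $\mathcal T_{-\sigma}:=\mathcal T_\sigma^*$, and $\mathcal T_\sigma\subset\mathcal T_0$ for $\sigma\in(0,\infty]$. Limits "as $\sigma\to\infty$" refer to arbitrary sequences $\sigma_n\to\infty$. (A1) (i) There is $M_1>0$ independent of $\sigma$ with $M_1\|u\|_{\mathcal T_0}\le\|u\|_{\mathcal T_\sigma}$ for all $\sigma\in(0,\infty]$, $u\in\mathcal T_\sigma$. (ii) If $v_\sigma\in\mathcal T_\sigma$ with $\|v_\sigma\|_{\mathcal T_\sigma}\le C$ ($C$ independent of $\sigma$), then $\{v_\sigma\}$ is relatively compact in $\mathcal T_0$ as $\sigma\to\infty$ and each limit point lies in $\mathcal T_\infty$. (A2) For each $\sigma\in(0,\infty]$, $\mathcal E_\sigma:\mathcal T_\sigma\to[0,\infty)$ is weakly lower semicontinuous on $\mathcal T_\sigma$, and: (i) there is $\varphi\in C^0([0,\infty)^2)$ with $|\mathcal E_\sigma(u)-\mathcal E_\sigma(v)|\le\varphi(\|u\|_{\mathcal T_\sigma},\|v\|_{\mathcal T_\sigma})\|u-v\|_{\mathcal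 T_\sigma}$ for all $u,v\in\mathcal T_\sigma$; (ii) there exist $p\in(1,\infty)$, $\alpha>0$, $\psi\in C^0([0,\infty))$ with $\psi(t)/t^p\to0$ as $t\to\infty$, independent of $\sigma$, with $\alpha\|u\|^p_{\mathcal T_\sigma}\le\mathcal E_\sigma(u)+\psi(\|u\|_{\mathcal T_\sigma})$. (A3) With $\overline{\mathcal E}_\sigma:\mathcal T_0\to[0,\infty]$ equal to $\mathcal E_\sigma$ on $\mathcal T_\sigma$ and $+\infty$ on $\mathcal T_0\setminus\mathcal T_\sigma$ ($\sigma\in(0,\infty]$), $\overline{\mathcal E}_\sigma$ $\Gamma$-converges to $\overline{\mathcal E}_\infty$ as $\sigma\to\infty$ in the strong topology of $\mathcal T_0$. (A4) For $\sigma\in(0,\infty]$, $h\in(0,h_0]$, $W_{\sigma,h}\subset\mathcal T_\sigma$ are finite-dimensional subspaces such that for each $h$ the span of $\bigcup_{\sigma\in(0,\infty]}W_{\sigma,h}$ is finite-dimensional, and: (i) for every $\sigma\in(0,\infty]$ and $u\in\mathcal T_\sigma$ there exist $h_n\to0$ and $u_n\in W_{\sigma,h_n}$ with $\|u-u_n\|_{\mathcal T_\sigma}\to0$; (ii) for each $h\in(0,h_0]$, $W_{\infty,h}=\mathcal T_\infty\cap\bigcup_{\sigma\in(0,\infty]}W_{\sigma,h}$; (iii) with $W_{\infty,0}:=\mathcal T_\infty$: for every $h\in[0,h_0]$, every $v\in W_{\infty,h}$ and every sequence $(\sigma_n,h_n)$ with $\sigma_n\to\infty$, $h_n\in(0,h_0]$,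 and $h_n=h$ for all $n$ if $h>0$, $h_n\to0$ if $h=0$, there exist $v_{\sigma_n}\in\mathcal T_{\sigma_n}$ with $\|v_{\sigma_n}-v\|_{\mathcal T_0}\to0$ and $\mathcal E_{\sigma_n}(v_{\sigma_n})\to\mathcal E_\infty(v)$, and $v_n\in W_{\sigma_n,h_n}$ with $\|v_n-v_{\sigma_n}\|_{\mathcal T_{\sigma_n}}\to0$. Define $\mathcal E_{\sigma,h}:\mathcal T_0\to[0,\infty]$ by $\mathcal E_{\sigma,h}=\mathcal E_\sigma$ on $W_{\sigma,h}$ and $+\infty$ on $\mathcal T_0\setminus W_{\sigma,h}$. $\Gamma$-convergence of $I_n$ to $I$ in a topology means: (1) $I(v)\le\liminf I_n(v_n)$ whenever $v_n\to v$; (2) for each $v$ there is $v_n\to v$ with $\limsup I_n(v_n)\le I(v)$. *)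

theory Defs
  imports "HOL-Analysis.Analysis"
begin

text \<open>The ambient Banach space \<T>_0 is the type 'a (class banach, with its norm).
  For \<sigma> \<in> (0,\<infinity>] (indexed by ereal) the space \<T>_\<sigma> is a linear subspace T \<sigma> of 'a
  carrying its own norm N \<sigma>. Only the values for \<sigma> \<in> (0,\<infinity>] are used.\<close>

definition normed_subspace :: "'a::real_vector set \<Rightarrow> ('a \<Rightarrow> real) \<Rightarrow> bool" where
  "normed_subspace S N \<longleftrightarrow> subspace S \<and> (\<forall>x\<in>S. 0 \<le> N x) \<and> (\<forall>x\<in>S. N x = 0 \<longleftrightarrow> x = 0)
     \<and> (\<forall>x\<in>S. \<forall>y\<in>S. N (x + y) \<le> N x + N y) \<and> (\<forall>x\<in>S. \<forall>c. N (c *\<^sub>R x) = \<bar>c\<bar> * N x)"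

definition complete_wrt :: "'a::real_vector set \<Rightarrow> ('a \<Rightarrow> real) \<Rightarrow> bool" where
  "complete_wrt S N \<longleftrightarrow> (\<forall>X. (\<forall>n. X n \<in> S) \<and> (\<forall>e>0. \<exists>M. \<forall>m\<ge>M. \<forall>n\<ge>M. N (X m - X n) < e)
      \<longrightarrow> (\<exists>x\<in>S. (\<lambda>n. N (X n - x)) \<longlonglongrightarrow> 0))"

definition banach_subspace :: "'a::real_vector set \<Rightarrow> ('a \<Rightarrow> real) \<Rightarrow> bool" where
  "banach_subspace S N \<longleftrightarrow> normed_subspace S N \<and> complete_wrt S N"

definition dual_space :: "'a::real_vector set \<Rightarrow> ('a \<Rightarrow> real) \<Rightarrow> ('a \<Rightarrow> real) set" where
  "dual_space S N = {f. (\<forall>x\<in>S. \<forall>y\<in>S. f (x + y) = f x + f y) \<and> (\<forall>x\<in>S. \<forall>c. f (c *\<^sub>R x) = c * f x)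
      \<and> (\<exists>C. \<forall>x\<in>S. \<bar>f x\<bar> \<le> C * N x) \<and> (\<forall>x. x \<notin> S \<longrightarrow> f x = 0)}"

definition dual_norm :: "'a::real_vector set \<Rightarrow> ('a \<Rightarrow> real) \<Rightarrow> ('a \<Rightarrow> real) \<Rightarrow> real" where
  "dual_norm S N f = Sup {\<bar>f x\<bar> | x. x \<in> S \<and> N x \<le> 1}"

definition reflexive_wrt :: "'a::real_vector set \<Rightarrow> ('a \<Rightarrow> real) \<Rightarrow> bool" where
  "reflexive_wrt S N \<longleftrightarrow> (\<forall>\<Phi> :: ('a \<Rightarrow> real) \<Rightarrow> real.
     ((\<forall>f\<in>dual_space S N. \<forall>g\<in>dual_space S N. \<Phi> (\<lambda>x. f x + g x) = \<Phi> f + \<Phi> g)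
      \<and> (\<forall>f\<in>dual_space S N. \<forall>c. \<Phi> (\<lambda>x. c * f x) = c * \<Phi> f)
      \<and> (\<exists>C. \<forall>f\<in>dual_space S N. \<bar>\<Phi> f\<bar> \<le> C * dual_norm S N f))
     \<longrightarrow> (\<exists>x\<in>S. \<forall>f\<in>dual_space S N. \<Phi> f = f x))"

definition weakly_lsc_on :: "'a::real_vector set \<Rightarrow> ('a \<Rightarrow> real) \<Rightarrow> ('a \<Rightarrow> real) \<Rightarrow> bool" where
  "weakly_lsc_on S N E \<longleftrightarrow> (\<forall>u X. u \<in> S \<and> (\<forall>n. X n \<in> S)
      \<and> (\<forall>f\<in>dual_space S N. (\<lambda>n. f (X n)) \<longlonglongrightarrow> f u)
      \<longrightarrow> ereal (E u) \<le> liminf (\<lambda>n. ereal (E (X n))))"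

definition ext_infty :: "'a set \<Rightarrow> ('a \<Rightarrow> real) \<Rightarrow> 'a \<Rightarrow> ereal" where
  "ext_infty S E v = (if v \<in> S then ereal (E v) else \<infinity>)"

definition gamma_converges :: "(nat \<Rightarrow> 'a::real_normed_vector \<Rightarrow> ereal) \<Rightarrow> ('a \<Rightarrow> ereal) \<Rightarrow> bool" where
  "gamma_converges I I0 \<longleftrightarrow>
     (\<forall>v vs. vs \<longlonglongrightarrow> v \<longrightarrow> I0 v \<le> liminf (\<lambda>n. I n (vs n)))
   \<and> (\<forall>v. \<exists>vs. vs \<longlonglongrightarrow> v \<and> limsup (\<lambda>n. I n (vs n)) \<le> I0 v)"

definition to_infty :: "(nat \<Rightarrow> real) \<Rightarrow> bool" where
  "to_infty s \<longleftrightarrow> (\<forall>n. 0 < s n) \<and> filterlim s at_top sequentially"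

definition setting :: "(ereal \<Rightarrow> 'a::banach set) \<Rightarrow> (ereal \<Rightarrow> 'a \<Rightarrow> real) \<Rightarrow> bool" where
  "setting T N \<longleftrightarrow> reflexive_wrt (UNIV::'a set) norm
     \<and> (\<forall>\<sigma>>0. banach_subspace (T \<sigma>) (N \<sigma>) \<and> reflexive_wrt (T \<sigma>) (N \<sigma>))"

definition hypA1 :: "(ereal \<Rightarrow> 'a::banach set) \<Rightarrow> (ereal \<Rightarrow> 'a \<Rightarrow> real) \<Rightarrow> bool" where
  "hypA1 T N \<longleftrightarrow>
     (\<exists>M1>0. \<forall>\<sigma>>0. \<forall>u\<in>T \<sigma>. M1 * norm u \<le> N \<sigma> u)
   \<and> (\<forall>s v C. to_infty s \<and> (\<forall>n. v n \<in> T (ereal (s n)) \<and> N (ereal (s n)) (v n) \<le> C) \<longrightarrow>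
        (\<exists>r w. strict_mono r \<and> (v \<circ> r) \<longlonglongrightarrow> w)
      \<and> (\<forall>r w. strict_mono r \<and> (v \<circ> r) \<longlonglongrightarrow> w \<longrightarrow> w \<in> T \<infinity>))"

definition hypA2 :: "(ereal \<Rightarrow> 'a::banach set) \<Rightarrow> (ereal \<Rightarrow> 'a \<Rightarrow> real) \<Rightarrow> (ereal \<Rightarrow> 'a \<Rightarrow> real) \<Rightarrow> bool" where
  "hypA2 T N E \<longleftrightarrow>
     (\<forall>\<sigma>>0. (\<forall>u\<in>T \<sigma>. 0 \<le> E \<sigma> u) \<and> weakly_lsc_on (T \<sigma>) (N \<sigma>) (E \<sigma>))
   \<and> (\<exists>\<phi>::real \<Rightarrow> real \<Rightarrow> real. continuous_on ({0..} \<times> {0..}) (\<lambda>(s, t). \<phi> s t)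
        \<and> (\<forall>\<sigma>>0. \<forall>u\<in>T \<sigma>. \<forall>v\<in>T \<sigma>. \<bar>E \<sigma> u - E \<sigma> v\<bar> \<le> \<phi> (N \<sigma> u) (N \<sigma> v) * N \<sigma> (u - v)))
   \<and> (\<exists>p \<alpha> (\<psi>::real \<Rightarrow> real). 1 < p \<and> 0 < \<alpha> \<and> continuous_on {0..} \<psi>
        \<and> ((\<lambda>t. \<psi> t / t powr p) \<longlongrightarrow> 0) at_top
        \<and> (\<forall>\<sigma>>0. \<forall>u\<in>T \<sigma>. \<alpha> * N \<sigma> u powr p \<le> E \<sigma> u + \<psi> (N \<sigma> u)))"

definition hypA3 :: "(ereal \<Rightarrow> 'a::banach set) \<Rightarrow> (ereal \<Rightarrow> 'a \<Rightarrow> real) \<Rightarrow> bool" where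
  "hypA3 T E \<longleftrightarrow> (\<forall>s. to_infty s \<longrightarrow>
     gamma_converges (\<lambda>n. ext_infty (T (ereal (s n))) (E (ereal (s n)))) (ext_infty (T \<infinity>) (E \<infinity>)))"

definition findim :: "'a::real_vector set \<Rightarrow> bool" where
  "findim S \<longleftrightarrow> (\<exists>B. finite B \<and> span S = span B)"

definition hypA4 :: "(ereal \<Rightarrow> 'a::banach set) \<Rightarrow> (ereal \<Rightarrow> 'a \<Rightarrow> real) \<Rightarrow> (ereal \<Rightarrow> 'a \<Rightarrow> real)
    \<Rightarrow> (ereal \<Rightarrow> real \<Rightarrow> 'a set) \<Rightarrow> real \<Rightarrow> bool" where
  "hypA4 T N E W h0 \<longleftrightarrow> 0 < h0
   \<and> (\<forall>\<sigma>>0. \<forall>h\<in>{0<..h0}. subspace (W \<sigma> h) \<and> findim (W \<sigma> h) \<and> W \<sigma> h \<subseteq> T \<sigma>)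
   \<and> (\<forall>h\<in>{0<..h0}. findim (\<Union>\<sigma>\<in>{0<..}. W \<sigma> h))
   \<and> (\<forall>\<sigma>>0. \<forall>u\<in>T \<sigma>. \<exists>hs us. (\<forall>n. hs n \<in> {0<..h0} \<and> us n \<in> W \<sigma> (hs n)) \<and> hs \<longlonglongrightarrow> 0
        \<and> (\<lambda>n. N \<sigma> (u - us n)) \<longlonglongrightarrow> 0)
   \<and> (\<forall>h\<in>{0<..h0}. W \<infinity> h = T \<infinity> \<inter> (\<Union>\<sigma>\<in>{0<..}. W \<sigma> h))
   \<and> (\<forall>h\<in>{0..h0}. \<forall>v\<in>(if h = 0 then T \<infinity> else W \<infinity> h). \<forall>s hs.
        to_infty s \<and> (\<forall>n. hs n \<in> {0<..h0})
        \<and> (h > 0 \<longrightarrow> (\<forall>n. hs n = h)) \<and> (h = 0 \<longrightarrow> hs \<longlonglongrightarrow> 0) \<longrightarrow>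
        (\<exists>v\<sigma> vn. (\<forall>n. v\<sigma> n \<in> T (ereal (s n))) \<and> (\<lambda>n. norm (v\<sigma> n - v)) \<longlonglongrightarrow> 0
           \<and> (\<lambda>n. E (ereal (s n)) (v\<sigma> n)) \<longlonglongrightarrow> E \<infinity> v
           \<and> (\<forall>n. vn n \<in> W (ereal (s n)) (hs n))
           \<and> (\<lambda>n. N (ereal (s n)) (vn n - v\<sigma> n)) \<longlonglongrightarrow> 0))"

definition E_disc :: "(ereal \<Rightarrow> 'a \<Rightarrow> real) \<Rightarrow> (ereal \<Rightarrow> real \<Rightarrow> 'a set) \<Rightarrow> ereal \<Rightarrow> real \<Rightarrow> 'a \<Rightarrow> ereal" where
  "E_disc E W \<sigma> h = ext_infty (W \<sigma> h) (E \<sigma>)"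

end

theory Submission
  imports Defs
begin

text \<open>Since \<open>W \<sigma> h \<subseteq> T \<sigma>\<close>, the discrete functionals dominate the continuous ones, so the
  liminf inequality is inherited from (A3). For a recovery sequence at \<open>v \<in> T \<infinity>\<close>, (A4)(iii)
  with \<open>h = 0\<close> gives \<open>v\<^sub>\<sigma> \<rightarrow> v\<close> with \<open>E\<^sub>\<sigma> v\<^sub>\<sigma> \<rightarrow> E\<^sub>\<infinity> v\<close> and discrete \<open>v\<^sub>n\<close> that are
  \<open>N\<^sub>\<sigma>\<close>-close to \<open>v\<^sub>\<sigma>\<close>. By (A1)(i) also \<open>v\<^sub>n \<rightarrow> v\<close>; the coercivity (A2)(ii) bounds the norms
  \<open>N\<^sub>\<sigma> v\<^sub>\<sigma>\<close>, hence \<open>N\<^sub>\<sigma> v\<^sub>n\<close>, uniformly, so the local Lipschitz bound (A2)(i) gives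
  \<open>E\<^sub>\<sigma> v\<^sub>n - E\<^sub>\<sigma> v\<^sub>\<sigma> \<rightarrow> 0\<close>.\<close>

lemma gamma_converges_if_above:
  fixes I J :: "nat \<Rightarrow> 'a::real_normed_vector \<Rightarrow> ereal"
  assumes "gamma_converges I I0"
    and "\<And>n v. I n v \<le> J n v"
    and "\<And>v. \<exists>vs. vs \<longlonglongrightarrow> v \<and> limsup (\<lambda>n. J n (vs n)) \<le> I0 v"
  shows "gamma_converges J I0"
  unfolding gamma_converges_def
proof (intro conjI allI impI)
  fix v :: 'a and vs assume "vs \<longlonglongrightarrow> v"
  then have "I0 v \<le> liminf (\<lambda>n. I n (vs n))"
    using assms(1) unfolding gamma_converges_def by blast
  also have "\<dots> \<le> liminf (\<lambda>n. J n (vs n))"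
    by (intro Liminf_mono always_eventually allI assms(2))
  finally show "I0 v \<le> liminf (\<lambda>n. J n (vs n))" .
qed (use assms(3) in blast)

lemma powr_coercive_bound:
  fixes \<psi> :: "real \<Rightarrow> real"
  assumes p: "1 < p" and \<alpha>: "0 < \<alpha>" and \<psi>: "((\<lambda>t. \<psi> t / t powr p) \<longlongrightarrow> 0) at_top"
  obtains R where "\<And>t K. \<alpha> * t powr p \<le> K + \<psi> t \<Longrightarrow> t \<le> max R (2 * K / \<alpha>)"
proof -
  have "eventually (\<lambda>t. dist (\<psi> t / t powr p) 0 < \<alpha> / 2) at_top"
    by (rule tendstoD[OF \<psi>]) (use \<alpha> in simp)
  then obtain R0 where R0: "\<And>t. t \<ge> R0 \<Longrightarrow> \<bar>\<psi> t / t powr p\<bar> < \<alpha> / 2"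
    unfolding eventually_at_top_linorder dist_real_def by auto
  have "t \<le> max (max R0 1) (2 * K / \<alpha>)" if "\<alpha> * t powr p \<le> K + \<psi> t" for t K
  proof (cases "t \<le> max R0 1")
    case False
    then have t: "t \<ge> 1" "t \<ge> R0" by auto
    then have "\<psi> t < \<alpha> / 2 * t powr p"
      using R0[of t] by (simp add: divide_less_eq abs_less_iff)
    then have "t powr p \<le> 2 * K / \<alpha>"
      using that \<alpha> by (simp add: pos_le_divide_eq mult.commute)
    moreover have "t powr 1 \<le> t powr p"
      using t p by (intro powr_mono) auto
    ultimately show ?thesis using t by simp
  qed simp
  then show ?thesis using that by blast
qed

lemma coercive_seq_bounded:
  fixes \<psi> :: "real \<Rightarrow> real"
  assumes "1 < p" "0 < \<alpha>" "((\<lambda>t. \<psi> t / t powr p) \<longlongrightarrow> 0) at_top"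
    and "\<And>n. \<alpha> * t n powr p \<le> e n + \<psi> (t n)"
    and "Bseq e"
  obtains B where "\<And>n. t n \<le> B"
proof -
  obtain R where R: "\<And>t K. \<alpha> * t powr p \<le> K + \<psi> t \<Longrightarrow> t \<le> max R (2 * K / \<alpha>)"
    using powr_coercive_bound assms(1-3) by blast
  obtain K where K: "\<And>n. norm (e n) \<le> K"
    using \<open>Bseq e\<close> unfolding Bseq_def by blast
  have "\<alpha> * t n powr p \<le> K + \<psi> (t n)" for n
    using assms(4)[of n] K[of n] by simp
  then show ?thesis
    using that R by blast
qed

lemma tendsto_zero_weighted_by_continuous:
  fixes \<phi> :: "real \<Rightarrow> real \<Rightarrow> real"
  assumes \<phi>: "continuous_on ({0..} \<times> {0..}) (\<lambda>(s, t). \<phi> s t)"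
    and a: "\<And>n. a n \<in> {0..B}" and b: "\<And>n. b n \<in> {0..B}"
    and d: "d \<longlonglongrightarrow> 0" "\<And>n. 0 \<le> d n"
    and x: "\<And>n. \<bar>x n\<bar> \<le> \<phi> (a n) (b n) * d n"
  shows "x \<longlonglongrightarrow> 0"
proof -
  have "compact ((\<lambda>(s, t). \<phi> s t) ` ({0..B} \<times> {0..B}))"
    by (rule compact_continuous_image[OF continuous_on_subset[OF \<phi>]]) (auto intro: compact_Times)
  then obtain P where P: "\<And>y. y \<in> (\<lambda>(s, t). \<phi> s t) ` ({0..B} \<times> {0..B}) \<Longrightarrow> norm y \<le> P"
    using compact_imp_bounded[of "(\<lambda>(s, t). \<phi> s t) ` ({0..B} \<times> {0..B})"] unfolding bounded_iff by blast
  show ?thesis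
  proof (rule Lim_null_comparison)
    have \<phi>_le: "\<phi> (a n) (b n) \<le> P" for n
    proof -
      have "\<phi> (a n) (b n) \<in> (\<lambda>(s, t). \<phi> s t) ` ({0..B} \<times> {0..B})"
        using a[of n] b[of n] by (intro rev_image_eqI[of "(a n, b n)"]) auto
      then have "norm (\<phi> (a n) (b n)) \<le> P"
        by (rule P)
      then show ?thesis
        by simp
    qed
    have "\<bar>x n\<bar> \<le> P * d n" for n
      using x[of n] mult_right_mono[OF \<phi>_le[of n] d(2)[of n]] by linarith
    then show "\<forall>\<^sub>F n in sequentially. norm (x n) \<le> P * d n"
      by simp
    show "(\<lambda>n. P * d n) \<longlonglongrightarrow> 0"
      using tendsto_mult_right_zero[OF d(1)] .
  qed
qed

lemma normed_subspace_nonneg: "normed_subspace S N \<Longrightarrow> x \<in> S \<Longrightarrow> 0 \<le> N x"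
  unfolding normed_subspace_def by (elim conjE) (erule bspec)

lemma normed_subspace_triangle:
  "normed_subspace S N \<Longrightarrow> x \<in> S \<Longrightarrow> y \<in> S \<Longrightarrow> N (x + y) \<le> N x + N y"
  unfolding normed_subspace_def by (elim conjE) (simp only:)

lemma normed_subspace_subspace: "normed_subspace S N \<Longrightarrow> subspace S"
  unfolding normed_subspace_def by (elim conjE)

lemma energy_tendsto_along_close_seq:
  fixes S :: "nat \<Rightarrow> 'a::real_vector set" and Nn En :: "nat \<Rightarrow> 'a \<Rightarrow> real"
    and \<phi> :: "real \<Rightarrow> real \<Rightarrow> real" and \<psi> :: "real \<Rightarrow> real"
  assumes S: "\<And>n. normed_subspace (S n) (Nn n)"
    and \<phi>: "continuous_on ({0..} \<times> {0..}) (\<lambda>(s, t). \<phi> s t)"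
    and lip: "\<And>n u w. u \<in> S n \<Longrightarrow> w \<in> S n \<Longrightarrow> \<bar>En n u - En n w\<bar> \<le> \<phi> (Nn n u) (Nn n w) * Nn n (u - w)"
    and "1 < p" "0 < \<alpha>" "((\<lambda>t. \<psi> t / t powr p) \<longlongrightarrow> 0) at_top"
    and coercive: "\<And>n u. u \<in> S n \<Longrightarrow> \<alpha> * Nn n u powr p \<le> En n u + \<psi> (Nn n u)"
    and u: "\<And>n. u n \<in> S n" "(\<lambda>n. En n (u n)) \<longlonglongrightarrow> L"
    and w: "\<And>n. w n \<in> S n" "(\<lambda>n. Nn n (w n - u n)) \<longlonglongrightarrow> 0"
  shows "(\<lambda>n. En n (w n)) \<longlonglongrightarrow> L"
proof -
  have diff_in: "w n - u n \<in> S n" for n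
    using u(1) w(1) normed_subspace_subspace[OF S] by (simp add: subspace_diff)
  obtain Bu where Bu: "\<And>n. Nn n (u n) \<le> Bu"
    using coercive_seq_bounded[of p \<alpha> \<psi> "\<lambda>n. Nn n (u n)" "\<lambda>n. En n (u n)"] assms(4-6)
      coercive[OF u(1)] convergent_imp_Bseq[OF convergentI[OF u(2)]]
    by blast
  obtain Bd where Bd: "\<And>n. Nn n (w n - u n) \<le> Bd"
    using convergent_imp_Bseq[OF convergentI[OF w(2)]] unfolding Bseq_def real_norm_def
    by (meson abs_le_D1)
  have Nw: "Nn n (w n) \<le> Bu + Bd" for n
    using normed_subspace_triangle[OF S u(1) diff_in, of n] Bu[of n] Bd[of n] by simp
  have "(\<lambda>n. En n (w n) - En n (u n)) \<longlonglongrightarrow> 0"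
  proof (rule tendsto_zero_weighted_by_continuous[OF \<phi>, where B = "max Bu (Bu + Bd)"])
    show "Nn n (w n) \<in> {0..max Bu (Bu + Bd)}" for n
      using normed_subspace_nonneg[OF S w(1)] Nw[of n] by simp
    show "Nn n (u n) \<in> {0..max Bu (Bu + Bd)}" for n
      using normed_subspace_nonneg[OF S u(1)] Bu[of n] by simp
    show "0 \<le> Nn n (w n - u n)" for n
      using normed_subspace_nonneg[OF S diff_in] .
    show "\<bar>En n (w n) - En n (u n)\<bar> \<le> \<phi> (Nn n (w n)) (Nn n (u n)) * Nn n (w n - u n)" for n
      using lip[OF w(1) u(1)] .
  qed (rule w(2))
  then have "(\<lambda>n. (En n (w n) - En n (u n)) + En n (u n)) \<longlonglongrightarrow> 0 + L"
    by (intro tendsto_add u(2))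
  then show ?thesis by simp
qed

lemma setting_normed_subspace:
  "setting T N \<Longrightarrow> 0 < \<sigma> \<Longrightarrow> normed_subspace (T \<sigma>) (N \<sigma>)"
  unfolding setting_def banach_subspace_def by simp

lemma hypA4_subset:
  assumes "hypA4 T N E W h0" "0 < \<sigma>" "h \<in> {0<..h0}"
  shows "W \<sigma> h \<subseteq> T \<sigma>"
proof -
  have "\<forall>\<sigma>>0. \<forall>h\<in>{0<..h0}. subspace (W \<sigma> h) \<and> findim (W \<sigma> h) \<and> W \<sigma> h \<subseteq> T \<sigma>"
    using assms(1) unfolding hypA4_def by (elim conjE)
  then show ?thesis
    using assms(2,3) by simp
qed

lemma hypA1_tendsto_zero:
  assumes "hypA1 T N" and "\<And>n. 0 < \<sigma> n" and "\<And>n. d n \<in> T (\<sigma> n)"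
    and "(\<lambda>n. N (\<sigma> n) (d n)) \<longlonglongrightarrow> 0"
  shows "d \<longlonglongrightarrow> 0"
proof -
  obtain M1 where M1: "0 < M1" "\<And>\<sigma> u. 0 < \<sigma> \<Longrightarrow> u \<in> T \<sigma> \<Longrightarrow> M1 * norm u \<le> N \<sigma> u"
    using \<open>hypA1 T N\<close> unfolding hypA1_def by (elim conjE exE) blast
  show ?thesis
  proof (rule Lim_null_comparison)
    have "norm (d n) \<le> N (\<sigma> n) (d n) / M1" for n
      using M1(2)[OF assms(2,3)] M1(1) by (simp add: pos_le_divide_eq mult.commute)
    then show "\<forall>\<^sub>F n in sequentially. norm (d n) \<le> N (\<sigma> n) (d n) / M1"
      by simp
    show "(\<lambda>n. N (\<sigma> n) (d n) / M1) \<longlonglongrightarrow> 0"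
      using tendsto_divide_zero[OF assms(4)] .
  qed
qed

lemma hypA2E:
  assumes "hypA2 T N E"
  obtains \<phi> :: "real \<Rightarrow> real \<Rightarrow> real" and p \<alpha> and \<psi> :: "real \<Rightarrow> real"
  where "continuous_on ({0..} \<times> {0..}) (\<lambda>(s, t). \<phi> s t)"
    and "\<And>\<sigma> u v. 0 < \<sigma> \<Longrightarrow> u \<in> T \<sigma> \<Longrightarrow> v \<in> T \<sigma> \<Longrightarrow>
           \<bar>E \<sigma> u - E \<sigma> v\<bar> \<le> \<phi> (N \<sigma> u) (N \<sigma> v) * N \<sigma> (u - v)"
    and "1 < p" "0 < \<alpha>" "((\<lambda>t. \<psi> t / t powr p) \<longlongrightarrow> 0) at_top"
    and "\<And>\<sigma> u. 0 < \<sigma> \<Longrightarrow> u \<in> T \<sigma> \<Longrightarrow> \<alpha> * N \<sigma> u powr p \<le> E \<sigma> u + \<psi> (N \<sigma> u)"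
proof -
  obtain \<phi> :: "real \<Rightarrow> real \<Rightarrow> real" where "continuous_on ({0..} \<times> {0..}) (\<lambda>(s, t). \<phi> s t)"
    and "\<forall>\<sigma>>0. \<forall>u\<in>T \<sigma>. \<forall>v\<in>T \<sigma>. \<bar>E \<sigma> u - E \<sigma> v\<bar> \<le> \<phi> (N \<sigma> u) (N \<sigma> v) * N \<sigma> (u - v)"
    using conjunct1[OF conjunct2[OF assms[unfolded hypA2_def]]] by blast
  moreover obtain p \<alpha> and \<psi> :: "real \<Rightarrow> real" where "1 < p" "0 < \<alpha>" "((\<lambda>t. \<psi> t / t powr p) \<longlongrightarrow> 0) at_top"
    and "\<forall>\<sigma>>0. \<forall>u\<in>T \<sigma>. \<alpha> * N \<sigma> u powr p \<le> E \<sigma> u + \<psi> (N \<sigma> u)"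
    using conjunct2[OF conjunct2[OF assms[unfolded hypA2_def]]] by blast
  ultimately show thesis
    by (intro that[of \<phi> p \<alpha> \<psi>]) blast+
qed

lemma hypA4_recoveryE:
  assumes A4: "hypA4 T N E W h0"
    and "to_infty s" "hs \<longlonglongrightarrow> 0" "\<And>n. hs n \<in> {0<..h0}" "v \<in> T \<infinity>"
  obtains v\<sigma> vn where "\<And>n. v\<sigma> n \<in> T (ereal (s n))" "(\<lambda>n. norm (v\<sigma> n - v)) \<longlonglongrightarrow> 0"
    "(\<lambda>n. E (ereal (s n)) (v\<sigma> n)) \<longlonglongrightarrow> E \<infinity> v"
    "\<And>n. vn n \<in> W (ereal (s n)) (hs n)" "(\<lambda>n. N (ereal (s n)) (vn n - v\<sigma> n)) \<longlonglongrightarrow> 0"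
proof -
  have "0 < h0"
    using A4 unfolding hypA4_def by (elim conjE)
  moreover have A: "\<forall>h\<in>{0..h0}. \<forall>v\<in>(if h = 0 then T \<infinity> else W \<infinity> h). \<forall>s hs.
      to_infty s \<and> (\<forall>n. hs n \<in> {0<..h0}) \<and> (h > 0 \<longrightarrow> (\<forall>n. hs n = h)) \<and> (h = 0 \<longrightarrow> hs \<longlonglongrightarrow> 0) \<longrightarrow>
      (\<exists>v\<sigma> vn. (\<forall>n. v\<sigma> n \<in> T (ereal (s n))) \<and> (\<lambda>n. norm (v\<sigma> n - v)) \<longlonglongrightarrow> 0
         \<and> (\<lambda>n. E (ereal (s n)) (v\<sigma> n)) \<longlonglongrightarrow> E \<infinity> v
         \<and> (\<forall>n. vn n \<in> W (ereal (s n)) (hs n))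
         \<and> (\<lambda>n. N (ereal (s n)) (vn n - v\<sigma> n)) \<longlonglongrightarrow> 0)"
    using A4 unfolding hypA4_def by (elim conjE)
  ultimately have "\<exists>v\<sigma> vn. (\<forall>n. v\<sigma> n \<in> T (ereal (s n))) \<and> (\<lambda>n. norm (v\<sigma> n - v)) \<longlonglongrightarrow> 0
         \<and> (\<lambda>n. E (ereal (s n)) (v\<sigma> n)) \<longlonglongrightarrow> E \<infinity> v
         \<and> (\<forall>n. vn n \<in> W (ereal (s n)) (hs n))
         \<and> (\<lambda>n. N (ereal (s n)) (vn n - v\<sigma> n)) \<longlonglongrightarrow> 0"
    using assms(2-5) by (intro A[rule_format, of 0 v s hs]) auto
  then show ?thesis
    by (elim exE conjE) (rule that; simp)
qed

lemma E_disc_recovery_sequence: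
  assumes "setting T N" "hypA1 T N" "hypA2 T N E" "hypA4 T N E W h0"
    and s: "to_infty s" and hs: "hs \<longlonglongrightarrow> 0" "\<And>n. hs n \<in> {0<..h0}"
    and v: "v \<in> T \<infinity>"
  obtains vs where "vs \<longlonglongrightarrow> v" and "\<And>n. vs n \<in> W (ereal (s n)) (hs n)"
    and "(\<lambda>n. E (ereal (s n)) (vs n)) \<longlonglongrightarrow> E \<infinity> v"
proof -
  have pos: "0 < ereal (s n)" for n
    using s unfolding to_infty_def by simp
  have S: "normed_subspace (T (ereal (s n))) (N (ereal (s n)))" for n
    using setting_normed_subspace[OF \<open>setting T N\<close> pos] .
  have WT: "W (ereal (s n)) (hs n) \<subseteq> T (ereal (s n))" for n
    using hypA4_subset[OF \<open>hypA4 T N E W h0\<close> pos hs(2)] .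
  obtain v\<sigma> vn where v\<sigma>: "\<And>n. v\<sigma> n \<in> T (ereal (s n))" "(\<lambda>n. norm (v\<sigma> n - v)) \<longlonglongrightarrow> 0"
      "(\<lambda>n. E (ereal (s n)) (v\<sigma> n)) \<longlonglongrightarrow> E \<infinity> v"
    and vn: "\<And>n. vn n \<in> W (ereal (s n)) (hs n)" "(\<lambda>n. N (ereal (s n)) (vn n - v\<sigma> n)) \<longlonglongrightarrow> 0"
    using hypA4_recoveryE[OF \<open>hypA4 T N E W h0\<close> s hs v] by blast
  have vnT: "vn n \<in> T (ereal (s n))" for n
    using vn(1) WT by blast
  have "(\<lambda>n. vn n - v\<sigma> n) \<longlonglongrightarrow> 0"
    using normed_subspace_subspace[OF S] vnT v\<sigma>(1)
    by (intro hypA1_tendsto_zero[OF \<open>hypA1 T N\<close> pos _ vn(2)]) (simp add: subspace_diff)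
  moreover have "(\<lambda>n. v\<sigma> n - v) \<longlonglongrightarrow> 0"
    using v\<sigma>(2) by (simp add: tendsto_norm_zero_iff)
  ultimately have "(\<lambda>n. (vn n - v\<sigma> n) + (v\<sigma> n - v) + v) \<longlonglongrightarrow> 0 + 0 + v"
    by (intro tendsto_add tendsto_const)
  then have vn_lim: "vn \<longlonglongrightarrow> v"
    by simp
  obtain \<phi> p \<alpha> \<psi> where \<phi>: "continuous_on ({0..} \<times> {0..}) (\<lambda>(s, t). \<phi> s t)"
    and lip: "\<And>\<sigma> u v. 0 < \<sigma> \<Longrightarrow> u \<in> T \<sigma> \<Longrightarrow> v \<in> T \<sigma> \<Longrightarrow>
           \<bar>E \<sigma> u - E \<sigma> v\<bar> \<le> \<phi> (N \<sigma> u) (N \<sigma> v) * N \<sigma> (u - v)"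
    and \<psi>: "1 < p" "0 < \<alpha>" "((\<lambda>t. \<psi> t / t powr p) \<longlongrightarrow> 0) at_top"
    and coercive: "\<And>\<sigma> u. 0 < \<sigma> \<Longrightarrow> u \<in> T \<sigma> \<Longrightarrow> \<alpha> * N \<sigma> u powr p \<le> E \<sigma> u + \<psi> (N \<sigma> u)"
    using hypA2E[OF \<open>hypA2 T N E\<close>] by blast
  have "(\<lambda>n. E (ereal (s n)) (vn n)) \<longlonglongrightarrow> E \<infinity> v"
    by (rule energy_tendsto_along_close_seq[OF S \<phi> lip[OF pos] \<psi> coercive[OF pos] v\<sigma>(1,3) vnT vn(2)])
  then show ?thesis
    using that vn_lim vn(1) by blast
qed

theorem theorem2p13:
  fixes T :: "ereal \<Rightarrow> 'a::banach set" and N E :: "ereal \<Rightarrow> 'a \<Rightarrow> real"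
    and W :: "ereal \<Rightarrow> real \<Rightarrow> 'a set" and h0 :: real
    and s hs :: "nat \<Rightarrow> real"
  assumes "setting T N"
    and "hypA1 T N" and "hypA2 T N E" and "hypA3 T E" and "hypA4 T N E W h0"
    and "to_infty s" and "hs \<longlonglongrightarrow> 0" and "\<forall>n. hs n \<in> {0<..h0}"
  shows "gamma_converges (\<lambda>n. E_disc E W (ereal (s n)) (hs n)) (ext_infty (T \<infinity>) (E \<infinity>))"
proof (rule gamma_converges_if_above)
  show "gamma_converges (\<lambda>n. ext_infty (T (ereal (s n))) (E (ereal (s n)))) (ext_infty (T \<infinity>) (E \<infinity>))"
    using \<open>hypA3 T E\<close> \<open>to_infty s\<close> unfolding hypA3_def by blast
  have "W (ereal (s n)) (hs n) \<subseteq> T (ereal (s n))" for n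
    using hypA4_subset[OF \<open>hypA4 T N E W h0\<close> _ assms(8)[rule_format]] \<open>to_infty s\<close>
    unfolding to_infty_def by simp
  then show "ext_infty (T (ereal (s n))) (E (ereal (s n))) v \<le> E_disc E W (ereal (s n)) (hs n) v" for n v
    unfolding E_disc_def ext_infty_def by auto
  show "\<exists>vs. vs \<longlonglongrightarrow> v \<and> limsup (\<lambda>n. E_disc E W (ereal (s n)) (hs n) (vs n)) \<le> ext_infty (T \<infinity>) (E \<infinity>) v"
    for v
  proof (cases "v \<in> T \<infinity>")
    case True
    obtain vs where vs: "vs \<longlonglongrightarrow> v" "\<And>n. vs n \<in> W (ereal (s n)) (hs n)"
      and "(\<lambda>n. E (ereal (s n)) (vs n)) \<longlonglongrightarrow> E \<infinity> v"
      using E_disc_recovery_sequence[OF assms(1-3,5-7) assms(8)[rule_format] True] by blast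
    then have "limsup (\<lambda>n. ereal (E (ereal (s n)) (vs n))) = ereal (E \<infinity> v)"
      by (intro lim_imp_Limsup tendsto_ereal) simp_all
    then show ?thesis
      using vs True by (intro exI[of _ vs]) (simp add: E_disc_def ext_infty_def)
  qed (auto simp: ext_infty_def)
qed

end
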